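(* Let $G$ be a graph on $n\ge 3$ vertices, and let $k$ be the maximum number of vertices of an induced subgraph of $G$ that is a threshold graph. Then $\rho_T(G)\le n-k+1$.
   Context: Graphs are finite and simple. A graph $G=(V,E)$ is a threshold graph if there exist weights $w:V\to\mathbb{R}$ and a real number $s$ such that for all distinct $i,j\in V$: $w(i)+w(j)\ge s$ iff $ij\in E$. For $u,v\in(\mathbb{R}\cup\{\infty\})^k$ the min-plus tropical dot product is $u\odot v=\min_i(u_i+v_i)$. A min-plus $k$-tropical dot product representation of $G$ is a map $f:V\to(\mathbb{R}\cup\{\infty\})^k$ with a threshold $t>0$ such that for all distinct $x,y\in V$: $xy\in E$ iff $f(x)\odot f(y)\ge t$. $\rho_T(G)$ is the least $k\ge 1$ for which such a representation exists. *)

theory Defs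
  imports "HOL-Library.Extended_Real"
begin

definition simple_graph :: "'a set \<Rightarrow> ('a \<Rightarrow> 'a \<Rightarrow> bool) \<Rightarrow> bool" where
  "simple_graph V E \<longleftrightarrow> finite V \<and> (\<forall>x\<in>V. \<forall>y\<in>V. E x y \<longleftrightarrow> E y x) \<and> (\<forall>x\<in>V. \<not> E x x)"

definition threshold_graph :: "'a set \<Rightarrow> ('a \<Rightarrow> 'a \<Rightarrow> bool) \<Rightarrow> bool" where
  "threshold_graph S E \<longleftrightarrow>
     (\<exists>(w :: 'a \<Rightarrow> real) (s :: real). \<forall>i\<in>S. \<forall>j\<in>S. i \<noteq> j \<longrightarrow> (w i + w j \<ge> s \<longleftrightarrow> E i j))"

text \<open>Vectors in (R \<union> {\<infinity>})^k are functions nat \<Rightarrow> ereal, whose entries at indices i < k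
  are never -\<infinity>.  The min-plus tropical dot product of two such vectors.\<close>

definition trop_vec :: "nat \<Rightarrow> (nat \<Rightarrow> ereal) \<Rightarrow> bool" where
  "trop_vec k u \<longleftrightarrow> (\<forall>i<k. u i \<noteq> -\<infinity>)"

definition trop_dot :: "nat \<Rightarrow> (nat \<Rightarrow> ereal) \<Rightarrow> (nat \<Rightarrow> ereal) \<Rightarrow> ereal" where
  "trop_dot k u v = Min ((\<lambda>i. u i + v i) ` {..<k})"

definition min_plus_rep :: "'a set \<Rightarrow> ('a \<Rightarrow> 'a \<Rightarrow> bool) \<Rightarrow> nat \<Rightarrow> bool" where
  "min_plus_rep V E k \<longleftrightarrow>
     (\<exists>(f :: 'a \<Rightarrow> nat \<Rightarrow> ereal) (t :: real). t > 0 \<and> (\<forall>x\<in>V. trop_vec k (f x)) \<and>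
        (\<forall>x\<in>V. \<forall>y\<in>V. x \<noteq> y \<longrightarrow> (E x y \<longleftrightarrow> trop_dot k (f x) (f y) \<ge> ereal t)))"

definition rho_T :: "'a set \<Rightarrow> ('a \<Rightarrow> 'a \<Rightarrow> bool) \<Rightarrow> nat" where
  "rho_T V E = (LEAST k. k \<ge> 1 \<and> min_plus_rep V E k)"

definition max_threshold_induced :: "'a set \<Rightarrow> ('a \<Rightarrow> 'a \<Rightarrow> bool) \<Rightarrow> nat" where
  "max_threshold_induced V E = Max {card S | S. S \<subseteq> V \<and> threshold_graph S E}"

end

theory Submission
  imports Defs
begin

text \<open>Take a maximum induced threshold subgraph on S with weights w and threshold s,
  and use the tropical threshold t = 1. One coordinate carries the shifted weights
  w x - s/2 + 1/2 on S and \<infinity> off S, so it decides exactly the pairs inside S. Each of the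
  remaining n - k vertices r gets its own coordinate: 0 at r, 1 at the neighbours of r and 1/2
  elsewhere. Its sums reach 1 except on the pairs {r, y} with y not adjacent to r, so it
  decides exactly the pairs containing r.\<close>

lemma trop_dot_ge_iff:
  assumes "k > 0"
  shows "ereal t \<le> trop_dot k u v \<longleftrightarrow> (\<forall>i<k. ereal t \<le> u i + v i)"
  unfolding trop_dot_def using assms by (subst Min_ge_iff) auto

lemma rho_T_le:
  assumes "k \<ge> 1" and "min_plus_rep V E k"
  shows "rho_T V E \<le> k"
  unfolding rho_T_def using assms by (intro Least_le) simp

lemma max_threshold_induced_attained:
  assumes "finite V"
  obtains S where "S \<subseteq> V" "threshold_graph S E" "card S = max_threshold_induced V E"
proof -
  let ?C = "{card S | S. S \<subseteq> V \<and> threshold_graph S E}"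
  have "?C \<subseteq> card ` Pow V"
    by auto
  then have "finite ?C"
    using assms by (meson finite_Pow_iff finite_imageI finite_subset)
  moreover have "card {} \<in> ?C"
    unfolding threshold_graph_def by (intro CollectI exI[of _ "{}"]) auto
  ultimately have "max_threshold_induced V E \<in> ?C"
    unfolding max_threshold_induced_def by (intro Max_in) auto
  then show ?thesis
    using that by auto
qed

definition threshold_coord :: "'a set \<Rightarrow> ('a \<Rightarrow> real) \<Rightarrow> real \<Rightarrow> 'a \<Rightarrow> ereal" where
  "threshold_coord S w s x = (if x \<in> S then ereal (w x - s/2 + 1/2) else \<infinity>)"

definition vertex_coord :: "('a \<Rightarrow> 'a \<Rightarrow> bool) \<Rightarrow> 'a \<Rightarrow> 'a \<Rightarrow> ereal" where
  "vertex_coord E r x = (if x = r then 0 else if E x r then 1 else ereal (1/2))"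

lemma threshold_coord_sum_ge_one_iff:
  assumes "\<forall>i\<in>S. \<forall>j\<in>S. i \<noteq> j \<longrightarrow> (s \<le> w i + w j \<longleftrightarrow> E i j)" and "x \<noteq> y"
  shows "1 \<le> threshold_coord S w s x + threshold_coord S w s y \<longleftrightarrow> ({x, y} \<subseteq> S \<longrightarrow> E x y)"
proof (cases "{x, y} \<subseteq> S")
  case True
  then have "1 \<le> threshold_coord S w s x + threshold_coord S w s y \<longleftrightarrow> s \<le> w x + w y"
    unfolding threshold_coord_def by (simp add: one_ereal_def, linarith)
  then show ?thesis
    using assms True by auto
qed (auto simp: threshold_coord_def)

lemma vertex_coord_sum_ge_one_iff:
  assumes "x \<noteq> y" and "E x y \<longleftrightarrow> E y x"
  shows "1 \<le> vertex_coord E r x + vertex_coord E r y \<longleftrightarrow> (r \<in> {x, y} \<longrightarrow> E x y)"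
proof -
  have half: "1 \<le> ereal (1/2) + ereal (1/2)"
    by (simp add: one_ereal_def)
  have "1 \<le> vertex_coord E r x + vertex_coord E r y" if "r \<notin> {x, y}"
    using that order_trans[OF half add_mono[of "ereal (1/2)" _ "ereal (1/2)"]]
    unfolding vertex_coord_def by auto
  moreover have "1 \<le> vertex_coord E r x + vertex_coord E r y \<longleftrightarrow> E x y" if "r \<in> {x, y}"
    using that assms unfolding vertex_coord_def by (auto simp: one_ereal_def)
  ultimately show ?thesis
    by blast
qed

theorem min_plus_rep_threshold_subgraph:
  assumes "simple_graph V E" and "S \<subseteq> V" and "threshold_graph S E"
  shows "min_plus_rep V E (card (V - S) + 1)"
proof -
  have "finite V" and sym: "\<And>x y. x \<in> V \<Longrightarrow> y \<in> V \<Longrightarrow> E x y \<longleftrightarrow> E y x"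
    using assms(1) unfolding simple_graph_def by auto
  obtain w :: "'a \<Rightarrow> real" and s :: real where ws: "\<forall>i\<in>S. \<forall>j\<in>S. i \<noteq> j \<longrightarrow> (s \<le> w i + w j \<longleftrightarrow> E i j)"
    using assms(3) unfolding threshold_graph_def by blast
  define m where "m = card (V - S)"
  obtain b where "bij_betw b {0..<m} (V - S)"
    using ex_bij_betw_nat_finite \<open>finite V\<close> m_def by blast
  then have b_onto: "b ` {..<m} = V - S"
    by (simp add: bij_betw_imp_surj_on atLeast0LessThan)
  define f where
    "f x i = (case i of 0 \<Rightarrow> threshold_coord S w s x | Suc j \<Rightarrow> vertex_coord E (b j) x)" for x i
  have "E x y \<longleftrightarrow> (\<forall>i<m+1. 1 \<le> f x i + f y i)" if "x \<in> V" "y \<in> V" "x \<noteq> y" for x y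
  proof -
    have "(\<forall>i<m+1. 1 \<le> f x i + f y i) \<longleftrightarrow>
        1 \<le> threshold_coord S w s x + threshold_coord S w s y \<and>
        (\<forall>j<m. 1 \<le> vertex_coord E (b j) x + vertex_coord E (b j) y)"
      by (simp only: Suc_eq_plus1[symmetric] All_less_Suc2 f_def nat.case)
    also have "\<dots> \<longleftrightarrow> ({x, y} \<subseteq> S \<longrightarrow> E x y) \<and> (\<forall>j<m. b j \<in> {x, y} \<longrightarrow> E x y)"
      using threshold_coord_sum_ge_one_iff[OF ws \<open>x \<noteq> y\<close>]
        vertex_coord_sum_ge_one_iff[OF \<open>x \<noteq> y\<close> sym[OF that(1,2)]]
      by simp
    also have "\<dots> \<longleftrightarrow> E x y"
    proof -
      have "{x, y} - S \<subseteq> b ` {..<m}"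
        using that b_onto by auto
      then have "{x, y} \<subseteq> S \<or> (\<exists>j<m. b j \<in> {x, y})"
        by fastforce
      then show ?thesis
        by auto
    qed
    finally show ?thesis
      by simp
  qed
  moreover have "trop_vec (m+1) (f x)" for x
    unfolding trop_vec_def f_def threshold_coord_def vertex_coord_def by (auto split: nat.split)
  ultimately show ?thesis
    unfolding min_plus_rep_def m_def[symmetric]
    by (intro exI[of _ f] exI[of _ 1]) (simp add: trop_dot_ge_iff one_ereal_def)
qed

theorem mainTheorem11:
  fixes V :: "'a set" and E :: "'a \<Rightarrow> 'a \<Rightarrow> bool"
  assumes "simple_graph V E" and "card V \<ge> 3"
  shows "rho_T V E \<le> card V - max_threshold_induced V E + 1"
proof -
  have "finite V"
    using assms(1) unfolding simple_graph_def by blast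
  then obtain S where S: "S \<subseteq> V" "threshold_graph S E" "card S = max_threshold_induced V E"
    by (rule max_threshold_induced_attained)
  have "rho_T V E \<le> card (V - S) + 1"
    using min_plus_rep_threshold_subgraph[OF assms(1) S(1,2)] by (intro rho_T_le) simp_all
  also have "card (V - S) = card V - card S"
    using S(1) \<open>finite V\<close> by (simp add: card_Diff_subset finite_subset)
  finally show ?thesis
    using S(3) by simp
qed

end
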